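(* Let $U$ be a state preparation unitary for $\ket\psi\bra\psi$, $\ket\psi\in\mathbb{C}^d$. Then reality testing can be solved with success probability at least $2/3$ using $2$ queries to $U$ and $2$ queries to $U^*$ (the entrywise complex conjugate of $U$). More generally, for every $\varepsilon>0$, using $O(1/\varepsilon^2)$ queries to $U$ and $U^*$ one can output an estimate of $\mathrm{real}(\ket\psi)$ with additive error at most $\varepsilon$ with probability at least $2/3$.
   Context: $\mathrm{real}(\ket\psi)=|\langle\psi^*|\psi\rangle|^2=\big|\sum_{i=1}^d\psi_i^2\big|^2$. Reality testing: decide with success probability at least $2/3$ whether $\mathrm{real}(\ket\psi)=1$ or $\mathrm{real}(\ket\psi)<1/10$, promised one holds. A unitary $U\in(\mathbb{C}^{\hat d\times\hat d})_{\mathsf A}\otimes(\mathbb{C}^{d\times d})_{\mathsf B}$ is a state preparation unitary for $\rho$ if $\mathrm{tr}_{\mathsf A}(U\ket0\bra0_{\mathsf{AB}}U^\dagger)=\rho_{\mathsf B}$. *)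

theory Defs
  imports Complex_Main "Jordan_Normal_Form.Matrix"
begin

text \<open>Tensor products use the index convention: index of a basis vector |a>|b> of C^m (x) C^n is a*n+b
(first factor = register A / query register).\<close>

definition cmat_adj :: "complex mat \<Rightarrow> complex mat" where
  "cmat_adj M = transpose_mat (map_mat cnj M)"

definition cmat_conj :: "complex mat \<Rightarrow> complex mat" where
  "cmat_conj M = map_mat cnj M"

definition unitary_mat :: "nat \<Rightarrow> complex mat \<Rightarrow> bool" where
  "unitary_mat n M \<longleftrightarrow> M \<in> carrier_mat n n \<and> M * cmat_adj M = 1\<^sub>m n"

definition kron :: "complex mat \<Rightarrow> complex mat \<Rightarrow> complex mat" where
  "kron A B = mat (dim_row A * dim_row B) (dim_col A * dim_col B)
     (\<lambda>(i,j). A $$ (i div dim_row B, j div dim_col B) * B $$ (i mod dim_row B, j mod dim_col B))"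

definition outer :: "complex vec \<Rightarrow> complex mat" where
  "outer v = mat (dim_vec v) (dim_vec v) (\<lambda>(i,j). v $ i * cnj (v $ j))"

definition ptrace_A :: "nat \<Rightarrow> nat \<Rightarrow> complex mat \<Rightarrow> complex mat" where
  "ptrace_A dA d \<rho> = mat d d (\<lambda>(i,j). \<Sum>a<dA. \<rho> $$ (a*d+i, a*d+j))"

definition state_prep :: "nat \<Rightarrow> nat \<Rightarrow> complex mat \<Rightarrow> complex mat \<Rightarrow> bool" where
  "state_prep dA d U \<rho> \<longleftrightarrow> unitary_mat (dA*d) U \<and>
     ptrace_A dA d (outer (U *\<^sub>v unit_vec (dA*d) 0)) = \<rho>"

definition is_unit_vec :: "nat \<Rightarrow> complex vec \<Rightarrow> bool" where
  "is_unit_vec d v \<longleftrightarrow> v \<in> carrier_vec d \<and> (\<Sum>i<d. (cmod (v $ i))\<^sup>2) = 1"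

definition realness :: "complex vec \<Rightarrow> real" where
  "realness v = (cmod (\<Sum>i<dim_vec v. (v $ i)\<^sup>2))\<^sup>2"

text \<open>The work space is C^(dA*d) (x) C^K (query register first,
ancilla of dimension K chosen by the algorithm).  Starting from |0>, a sequence of steps is applied:
a fixed unitary gate on the whole space (independent of the oracle), a query to U (U (x) I_K),
or a query to U^* (U^* (x) I_K).  Finally the computational basis is measured and the outcome is
post-processed classically.\<close>
datatype step = Gate "complex mat" | QueryU | QueryUconj

definition apply_step :: "nat \<Rightarrow> complex mat \<Rightarrow> step \<Rightarrow> complex vec \<Rightarrow> complex vec" where
  "apply_step K U s v = (case s of
      Gate G \<Rightarrow> G *\<^sub>v v
    | QueryU \<Rightarrow> kron U (1\<^sub>m K) *\<^sub>v v
    | QueryUconj \<Rightarrow> kron (cmat_conj U) (1\<^sub>m K) *\<^sub>v v)"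

definition final_state :: "nat \<Rightarrow> complex mat \<Rightarrow> step list \<Rightarrow> complex vec" where
  "final_state K U steps = fold (apply_step K U) steps (unit_vec (dim_row U * K) 0)"

definition valid_alg :: "nat \<Rightarrow> nat \<Rightarrow> nat \<Rightarrow> step list \<Rightarrow> bool" where
  "valid_alg dA d K steps \<longleftrightarrow> (\<forall>G. Gate G \<in> set steps \<longrightarrow> unitary_mat (dA*d*K) G)"

definition num_U_queries :: "step list \<Rightarrow> nat" where
  "num_U_queries steps = length (filter (\<lambda>s. s = QueryU) steps)"

definition num_Uconj_queries :: "step list \<Rightarrow> nat" where
  "num_Uconj_queries steps = length (filter (\<lambda>s. s = QueryUconj) steps)"

definition prob_outcome :: "complex vec \<Rightarrow> (nat \<Rightarrow> bool) \<Rightarrow> real" where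
  "prob_outcome v P = (\<Sum>x<dim_vec v. if P x then (cmod (v $ x))\<^sup>2 else 0)"

end

theory Submission
  imports Defs
begin

(* Let |phi> = U|0> in C^A (x) C^B; it purifies |psi><psi|, and U^*|0> = conj |phi> purifies
   conj |psi><psi|.  One query to U and one to U^* prepare |phi> (x) conj |phi>, and a swap test of
   the two B registers accepts with probability t = (1 + tr (rho conj rho)) / 2 = (1 + real psi) / 2,
   where rho = |psi><psi|.  Two independent swap tests both accept with probability t^2, which is 1
   if real psi = 1 and less than 1/3 if real psi < 1/10.  For n >= 3/eps^2 independent swap tests
   the number k of accepting ones has mean n t and variance n t (1 - t) <= n/4, so by Chebyshev
   2k/n - 1 is eps-close to real psi with probability at least 2/3.
   Every round works on a fresh ancilla and the earlier rounds are tensored with the identity on it,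
   so after n rounds the state is |0> (x) w (x) ... (x) w, with w the output of a single round. *)

section \<open>Index arithmetic, tensor products and gates\<close>

lemma sum_lessThan_mult:
  fixes f :: "nat \<Rightarrow> 'a::comm_monoid_add"
  shows "(\<Sum>j<n*m. f j) = (\<Sum>a<n. \<Sum>b<m. f (a*m + b))"
proof -
  have "(\<Sum>j<n*m. f j) = (\<Sum>a<n. sum f {a*m..<a*m + m})"
    by (rule sum.nat_group[symmetric])
  also have "\<dots> = (\<Sum>a<n. \<Sum>b<m. f (a*m + b))"
  proof (rule sum.cong[OF refl])
    show "sum f {a*m..<a*m + m} = (\<Sum>b<m. f (a*m + b))" for a
      using sum.shift_bounds_nat_ivl[of f 0 "a*m" m] by (simp add: lessThan_atLeast0 add.commute)
  qed
  finally show ?thesis .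
qed

lemma sum_pairs_lessThan_mult:
  fixes n m :: nat
  shows "(\<Sum>p1<n*m. \<Sum>p2<n*m. F p1 p2) = (\<Sum>i1<m. \<Sum>i2<m. \<Sum>a1<n. \<Sum>a2<n. F (a1*m + i1) (a2*m + i2))"
proof -
  have "(\<Sum>p1<n*m. \<Sum>p2<n*m. F p1 p2) = (\<Sum>a1<n. \<Sum>i1<m. \<Sum>p2<n*m. F (a1*m + i1) p2)"
    by (rule sum_lessThan_mult)
  also have "\<dots> = (\<Sum>a1<n. \<Sum>i1<m. \<Sum>a2<n. \<Sum>i2<m. F (a1*m + i1) (a2*m + i2))"
    by (rule sum.cong[OF refl], rule sum.cong[OF refl], rule sum_lessThan_mult)
  also have "\<dots> = (\<Sum>a1<n. \<Sum>i1<m. \<Sum>i2<m. \<Sum>a2<n. F (a1*m + i1) (a2*m + i2))"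
    by (rule sum.cong[OF refl], rule sum.cong[OF refl], rule sum.swap)
  also have "\<dots> = (\<Sum>i1<m. \<Sum>a1<n. \<Sum>i2<m. \<Sum>a2<n. F (a1*m + i1) (a2*m + i2))"
    by (rule sum.swap)
  also have "\<dots> = (\<Sum>i1<m. \<Sum>i2<m. \<Sum>a1<n. \<Sum>a2<n. F (a1*m + i1) (a2*m + i2))"
    by (rule sum.cong[OF refl], rule sum.swap)
  finally show ?thesis .
qed

lemma mult_add_less_mult:
  fixes a b n m :: nat
  assumes "a < n" and "b < m"
  shows "a*m + b < n*m"
proof -
  have "a*m + b < Suc a * m" using assms(2) by simp
  also have "\<dots> \<le> n*m" using assms(1) by (intro mult_le_mono1) simp
  finally show ?thesis .
qed

lemma mult_add_div_eq [simp]: "b < m \<Longrightarrow> (a*m + b) div m = (a::nat)"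
  and mult_add_mod_eq [simp]: "b < m \<Longrightarrow> (a*m + b) mod m = (b::nat)"
  by simp_all

lemma mod_mult_eq_mod_mult_iff:
  fixes i j K P :: nat
  shows "i mod (K*P) = j mod (K*P) \<longleftrightarrow> i div P mod K = j div P mod K \<and> i mod P = j mod P"
proof -
  have split: "x mod (K*P) = P * (x div P mod K) + x mod P" for x
    by (metis mod_mult2_eq mult.commute)
  show ?thesis
  proof
    assume eq: "i mod (K*P) = j mod (K*P)"
    then have "i mod P = j mod P"
      by (metis mod_mod_cancel dvd_triv_right)
    with eq show "i div P mod K = j div P mod K \<and> i mod P = j mod P"
      by (cases "P = 0") (simp_all add: split)
  qed (simp add: split)
qed

lemma index_mult_mat_vec_sum:
  "i < dim_row A \<Longrightarrow> dim_vec v = dim_col A \<Longrightarrow> (A *\<^sub>v v) $ i = (\<Sum>j<dim_col A. A $$ (i,j) * v $ j)"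
  by (simp add: scalar_prod_def lessThan_atLeast0)

lemma index_mult_mat_vec_unit_vec:
  fixes U :: "complex mat"
  assumes "U \<in> carrier_mat m n" and "p < m" and "j < n"
  shows "(U *\<^sub>v unit_vec n j) $ p = U $$ (p, j)"
  using assms by (simp add: scalar_prod_def unit_vec_def if_distrib[of "\<lambda>x. _ * x"] cong: if_cong)

lemma index_mult_cmat_adj:
  assumes "i < dim_row M" and "j < dim_row M"
  shows "(M * cmat_adj M) $$ (i,j) = (\<Sum>k<dim_col M. M $$ (i,k) * cnj (M $$ (j,k)))"
  using assms by (simp add: cmat_adj_def scalar_prod_def lessThan_atLeast0)

lemma unitary_matI:
  assumes M: "M \<in> carrier_mat n n"
    and orth: "\<And>i j. i < n \<Longrightarrow> j < n \<Longrightarrow> (\<Sum>k<n. M $$ (i,k) * cnj (M $$ (j,k))) = of_bool (i = j)"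
  shows "unitary_mat n M"
proof -
  have "M * cmat_adj M = 1\<^sub>m n"
    using M by (intro eq_matI) (auto simp: index_mult_cmat_adj orth, auto simp: cmat_adj_def)
  with M show ?thesis by (simp add: unitary_mat_def)
qed

definition kron_vec :: "complex vec \<Rightarrow> complex vec \<Rightarrow> complex vec" where
  "kron_vec v w = vec (dim_vec v * dim_vec w) (\<lambda>i. v $ (i div dim_vec w) * w $ (i mod dim_vec w))"

lemma dim_kron_vec [simp]: "dim_vec (kron_vec v w) = dim_vec v * dim_vec w"
  unfolding kron_vec_def by simp

lemma index_kron_vec:
  "i < dim_vec v * dim_vec w \<Longrightarrow> kron_vec v w $ i = v $ (i div dim_vec w) * w $ (i mod dim_vec w)"
  unfolding kron_vec_def by simp

lemma dim_kron [simp]: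
  "dim_row (kron A B) = dim_row A * dim_row B" "dim_col (kron A B) = dim_col A * dim_col B"
  unfolding kron_def by simp_all

lemma index_kron:
  "i < dim_row A * dim_row B \<Longrightarrow> j < dim_col A * dim_col B \<Longrightarrow>
   kron A B $$ (i,j) = A $$ (i div dim_row B, j div dim_col B) * B $$ (i mod dim_row B, j mod dim_col B)"
  unfolding kron_def by simp

lemma kron_one_mult_kron_vec:
  assumes G: "G \<in> carrier_mat n n" and v: "dim_vec v = n" and w: "dim_vec w = m"
  shows "kron G (1\<^sub>m m) *\<^sub>v kron_vec v w = kron_vec (G *\<^sub>v v) w"
proof (rule eq_vecI)
  fix i assume "i < dim_vec (kron_vec (G *\<^sub>v v) w)"
  then have i: "i < n * m" using G w by (simp add: kron_vec_def)
  then have "m > 0" by (cases m) auto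
  have i_div: "i div m < n" using i by (simp add: less_mult_imp_div_less)
  have "(kron G (1\<^sub>m m) *\<^sub>v kron_vec v w) $ i = (\<Sum>j<n*m. kron G (1\<^sub>m m) $$ (i,j) * kron_vec v w $ j)"
    using G i v w by (subst index_mult_mat_vec_sum) (auto simp: kron_vec_def)
  also have "\<dots> = (\<Sum>a<n. \<Sum>b<m. kron G (1\<^sub>m m) $$ (i, a*m + b) * kron_vec v w $ (a*m + b))"
    by (rule sum_lessThan_mult)
  also have "\<dots> = (\<Sum>a<n. \<Sum>b<m. if b = i mod m then G $$ (i div m, a) * v $ a * w $ b else 0)"
    using i G v w \<open>m > 0\<close> mult_add_less_mult
    by (intro sum.cong refl) (auto simp: index_kron kron_vec_def)
  also have "\<dots> = (\<Sum>a<n. G $$ (i div m, a) * v $ a) * w $ (i mod m)"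
    using \<open>m > 0\<close> by (simp add: sum_distrib_right)
  also have "\<dots> = kron_vec (G *\<^sub>v v) w $ i"
    using G v w i i_div by (simp add: kron_vec_def scalar_prod_def lessThan_atLeast0)
  finally show "(kron G (1\<^sub>m m) *\<^sub>v kron_vec v w) $ i = kron_vec (G *\<^sub>v v) w $ i" .
qed (use G w in \<open>simp add: kron_vec_def\<close>)

lemma kron_one_mult:
  "kron U (1\<^sub>m (K*P)) = kron (kron U (1\<^sub>m K)) (1\<^sub>m P)"
proof (rule eq_matI)
  fix i j assume "i < dim_row (kron (kron U (1\<^sub>m K)) (1\<^sub>m P))" "j < dim_col (kron (kron U (1\<^sub>m K)) (1\<^sub>m P))"
  then have i: "i < dim_row U * K * P" and j: "j < dim_col U * K * P" by auto
  then have "0 < P" "0 < K" by (auto intro!: Nat.gr0I)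
  moreover have "x div (K*P) = x div P div K" for x :: nat
    by (metis div_mult2_eq mult.commute)
  moreover have "i div P < dim_row U * K" "j div P < dim_col U * K"
    using i j by (simp_all add: less_mult_imp_div_less)
  ultimately show "kron U (1\<^sub>m (K*P)) $$ (i,j) = kron (kron U (1\<^sub>m K)) (1\<^sub>m P) $$ (i,j)"
    using i j by (auto simp: index_kron mod_mult_eq_mod_mult_iff mult.assoc)
qed (simp_all add: mult.assoc)

lemma unitary_kron_one:
  assumes G: "unitary_mat n G"
  shows "unitary_mat (n*m) (kron G (1\<^sub>m m))"
proof (rule unitary_matI)
  have Gc: "G \<in> carrier_mat n n" and GG: "G * cmat_adj G = 1\<^sub>m n"
    using G by (auto simp: unitary_mat_def)
  show "kron G (1\<^sub>m m) \<in> carrier_mat (n*m) (n*m)" using Gc by auto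
  fix i j assume i: "i < n*m" and j: "j < n*m"
  then have "m > 0" by (cases m) auto
  have i_div: "i div m < n" and j_div: "j div m < n"
    using i j by (simp_all add: less_mult_imp_div_less)
  have "(\<Sum>k<n*m. kron G (1\<^sub>m m) $$ (i,k) * cnj (kron G (1\<^sub>m m) $$ (j,k)))
      = (\<Sum>a<n. \<Sum>b<m. if b = i mod m \<and> i mod m = j mod m
           then G $$ (i div m, a) * cnj (G $$ (j div m, a)) else 0)"
    unfolding sum_lessThan_mult
    using i j Gc \<open>m > 0\<close> mult_add_less_mult by (intro sum.cong refl) (auto simp: index_kron)
  also have "\<dots> = of_bool (i mod m = j mod m) * (G * cmat_adj G) $$ (i div m, j div m)"
    using Gc i_div j_div \<open>m > 0\<close> by (simp add: index_mult_cmat_adj)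
  also have "\<dots> = of_bool (i = j)"
    using GG i_div j_div by (auto, metis div_mult_mod_eq)
  finally show "(\<Sum>k<n*m. kron G (1\<^sub>m m) $$ (i,k) * cnj (kron G (1\<^sub>m m) $$ (j,k))) = of_bool (i = j)" .
qed

definition involution_on :: "nat \<Rightarrow> (nat \<Rightarrow> nat) \<Rightarrow> bool" where
  "involution_on n \<sigma> \<longleftrightarrow> (\<forall>i<n. \<sigma> i < n \<and> \<sigma> (\<sigma> i) = i)"

text \<open>For an involution \<open>\<sigma>\<close> this matrix is block diagonal, with a \<open>2 \<times> 2\<close> block on every
  orbit \<open>{i, \<sigma> i}\<close> and a \<open>1 \<times> 1\<close> block on every fixed point.\<close>

definition involution_gate ::
    "nat \<Rightarrow> (nat \<Rightarrow> nat) \<Rightarrow> (nat \<Rightarrow> complex) \<Rightarrow> (nat \<Rightarrow> complex) \<Rightarrow> complex mat" where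
  "involution_gate n \<sigma> a b =
     mat n n (\<lambda>(i,j). (if j = i then a i else 0) + (if j = \<sigma> i \<and> \<sigma> i \<noteq> i then b i else 0))"

lemma involution_gate_carrier [simp]:
  "involution_gate n \<sigma> a b \<in> carrier_mat n n"
  "dim_row (involution_gate n \<sigma> a b) = n" "dim_col (involution_gate n \<sigma> a b) = n"
  unfolding involution_gate_def by auto

lemma index_involution_gate:
  "i < n \<Longrightarrow> j < n \<Longrightarrow> involution_gate n \<sigma> a b $$ (i,j) =
     (if j = i then a i else 0) + (if j = \<sigma> i \<and> \<sigma> i \<noteq> i then b i else 0)"
  unfolding involution_gate_def by simp

lemma index_involution_gate_mult_vec:
  assumes "dim_vec v = n" and "i < n" and "\<sigma> i < n"
  shows "(involution_gate n \<sigma> a b *\<^sub>v v) $ i = a i * v $ i + (if \<sigma> i \<noteq> i then b i * v $ \<sigma> i else 0)"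
proof -
  have "(involution_gate n \<sigma> a b *\<^sub>v v) $ i = (\<Sum>j<n. involution_gate n \<sigma> a b $$ (i,j) * v $ j)"
    using assms by (subst index_mult_mat_vec_sum) auto
  also have "\<dots> = (\<Sum>j<n. (if j = i then a i * v $ j else 0) + (if j = \<sigma> i \<and> \<sigma> i \<noteq> i then b i * v $ j else 0))"
    using assms by (intro sum.cong refl) (auto simp: index_involution_gate)
  also have "\<dots> = a i * v $ i + (if \<sigma> i \<noteq> i then b i * v $ \<sigma> i else 0)"
    using assms by (simp add: sum.distrib sum.delta' sum.If_cases)
  finally show ?thesis .
qed

lemma unitary_involution_gate:
  assumes \<sigma>: "involution_on n \<sigma>"
    and fixed: "\<And>i. i < n \<Longrightarrow> \<sigma> i = i \<Longrightarrow> a i * cnj (a i) = 1"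
    and moved: "\<And>i. i < n \<Longrightarrow> \<sigma> i \<noteq> i \<Longrightarrow>
                  a i * cnj (a i) + b i * cnj (b i) = 1 \<and> a i * cnj (b (\<sigma> i)) + b i * cnj (a (\<sigma> i)) = 0"
  shows "unitary_mat n (involution_gate n \<sigma> a b)"
proof (rule unitary_matI)
  let ?G = "involution_gate n \<sigma> a b"
  fix i j assume i: "i < n" and j: "j < n"
  have si: "\<sigma> i < n" "\<sigma> (\<sigma> i) = i" and sj: "\<sigma> j < n" "\<sigma> (\<sigma> j) = j"
    using \<sigma> i j by (auto simp: involution_on_def)
  have "(\<Sum>k<n. ?G $$ (i,k) * cnj (?G $$ (j,k))) = (\<Sum>k\<in>{i, \<sigma> i}. ?G $$ (i,k) * cnj (?G $$ (j,k)))"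
    by (rule sum.mono_neutral_right) (use i si in \<open>auto simp: index_involution_gate\<close>)
  also have "\<dots> = of_bool (i = j)"
  proof (cases "\<sigma> i = i")
    case True
    then show ?thesis using i j si sj fixed by (auto simp: index_involution_gate)
  next
    case False
    note ab = moved[OF i False]
    consider "j = i" | "j = \<sigma> i" | "j \<noteq> i" "j \<noteq> \<sigma> i" by blast
    then show ?thesis
    proof cases
      case 3
      then have "\<sigma> j \<noteq> i" "\<sigma> j \<noteq> \<sigma> i" using si sj by metis+
      with 3 show ?thesis using False i j si sj by (simp add: index_involution_gate)
    qed (use False ab i si in \<open>auto simp: index_involution_gate\<close>)
  qed
  finally show "(\<Sum>k<n. ?G $$ (i,k) * cnj (?G $$ (j,k))) = of_bool (i = j)" .
qed simp

definition perm_gate :: "nat \<Rightarrow> (nat \<Rightarrow> nat) \<Rightarrow> complex mat" where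
  "perm_gate n \<sigma> = involution_gate n \<sigma> (\<lambda>i. of_bool (\<sigma> i = i)) (\<lambda>_. 1)"

lemma unitary_perm_gate: "involution_on n \<sigma> \<Longrightarrow> unitary_mat n (perm_gate n \<sigma>)"
  unfolding perm_gate_def by (rule unitary_involution_gate) (auto simp: involution_on_def)

lemma perm_gate_mult_vec:
  assumes "involution_on n \<sigma>"
  shows "perm_gate n \<sigma> *\<^sub>v vec n f = vec n (\<lambda>i. f (\<sigma> i))"
proof (rule eq_vecI)
  fix i assume "i < dim_vec (vec n (\<lambda>i. f (\<sigma> i)))"
  with assms show "(perm_gate n \<sigma> *\<^sub>v vec n f) $ i = vec n (\<lambda>i. f (\<sigma> i)) $ i"
    using index_involution_gate_mult_vec[of "vec n f" n i \<sigma>]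
    unfolding perm_gate_def involution_on_def by simp
qed (simp add: perm_gate_def)

definition lift_step :: "nat \<Rightarrow> step \<Rightarrow> step" where
  "lift_step m s = (case s of
      Gate G \<Rightarrow> Gate (kron G (1\<^sub>m m))
    | QueryU \<Rightarrow> QueryU
    | QueryUconj \<Rightarrow> QueryUconj)"

lemma num_queries_Nil [simp]: "num_U_queries [] = 0" "num_Uconj_queries [] = 0"
  by (simp_all add: num_U_queries_def num_Uconj_queries_def)

lemma num_queries_append [simp]:
  "num_U_queries (xs @ ys) = num_U_queries xs + num_U_queries ys"
  "num_Uconj_queries (xs @ ys) = num_Uconj_queries xs + num_Uconj_queries ys"
  by (simp_all add: num_U_queries_def num_Uconj_queries_def)

lemma num_queries_map_lift_step [simp]:
  "num_U_queries (map (lift_step m) xs) = num_U_queries xs"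
  "num_Uconj_queries (map (lift_step m) xs) = num_Uconj_queries xs"
  by (induction xs) (auto simp: num_U_queries_def num_Uconj_queries_def lift_step_def split: step.splits)

lemma valid_alg_append [simp]:
  "valid_alg dA d K (xs @ ys) \<longleftrightarrow> valid_alg dA d K xs \<and> valid_alg dA d K ys"
  by (auto simp: valid_alg_def)

lemma valid_alg_map_lift_step:
  assumes "valid_alg dA d K steps"
  shows "valid_alg dA d (K*m) (map (lift_step m) steps)"
  unfolding valid_alg_def
proof (intro allI impI)
  fix G assume "Gate G \<in> set (map (lift_step m) steps)"
  then obtain G' where "Gate G' \<in> set steps" and G: "G = kron G' (1\<^sub>m m)"
    by (auto simp: lift_step_def split: step.splits)
  with assms have "unitary_mat (dA*d*K) G'" by (simp add: valid_alg_def)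
  then show "unitary_mat (dA*d*(K*m)) G"
    unfolding G mult.assoc[symmetric] by (rule unitary_kron_one)
qed

lemma apply_step_lift_step:
  assumes U: "U \<in> carrier_mat (dA*d) (dA*d)" and s: "valid_alg dA d K [s]"
    and v: "dim_vec v = dA*d*K" and w: "dim_vec w = m"
  shows "apply_step (K*m) U (lift_step m s) (kron_vec v w) = kron_vec (apply_step K U s v) w"
    and "dim_vec (apply_step K U s v) = dA*d*K"
proof -
  have query: "kron V (1\<^sub>m (K*m)) *\<^sub>v kron_vec v w = kron_vec (kron V (1\<^sub>m K) *\<^sub>v v) w"
    if "V \<in> carrier_mat (dA*d) (dA*d)" for V
  proof -
    have "kron V (1\<^sub>m K) \<in> carrier_mat (dA*d*K) (dA*d*K)" using that by auto
    then show ?thesis using v w by (simp add: kron_one_mult kron_one_mult_kron_vec)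
  qed
  have "cmat_conj U \<in> carrier_mat (dA*d) (dA*d)" using U by (simp add: cmat_conj_def)
  with U s v w query[OF U] query[of "cmat_conj U"]
  show "apply_step (K*m) U (lift_step m s) (kron_vec v w) = kron_vec (apply_step K U s v) w"
    and "dim_vec (apply_step K U s v) = dA*d*K"
    by (cases s; auto simp: apply_step_def lift_step_def valid_alg_def unitary_mat_def kron_one_mult_kron_vec)+
qed

lemma fold_map_lift_step:
  assumes U: "U \<in> carrier_mat (dA*d) (dA*d)" and steps: "valid_alg dA d K steps"
    and v: "dim_vec v = dA*d*K" and w: "dim_vec w = m"
  shows "fold (apply_step (K*m) U) (map (lift_step m) steps) (kron_vec v w)
       = kron_vec (fold (apply_step K U) steps v) w"
  using steps v
proof (induction steps arbitrary: v)
  case (Cons s steps)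
  have "valid_alg dA d K [s]" using Cons.prems(1) valid_alg_append[of dA d K "[s]" steps] by simp
  with Cons show ?case using apply_step_lift_step[OF U _ _ w] by (simp add: valid_alg_def)
qed simp

section \<open>Measurement statistics\<close>

definition expectation :: "complex vec \<Rightarrow> (nat \<Rightarrow> real) \<Rightarrow> real" where
  "expectation v g = (\<Sum>x<dim_vec v. (cmod (v $ x))\<^sup>2 * g x)"

lemma prob_outcome_expectation: "prob_outcome v P = expectation v (\<lambda>x. of_bool (P x))"
  unfolding prob_outcome_def expectation_def by (intro sum.cong) auto

lemma expectation_add: "expectation v (\<lambda>x. f x + g x) = expectation v f + expectation v g"
  unfolding expectation_def by (simp add: distrib_left sum.distrib)

lemma expectation_diff: "expectation v (\<lambda>x. f x - g x) = expectation v f - expectation v g"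
  unfolding expectation_def by (simp add: right_diff_distrib sum_subtractf)

lemma expectation_scale: "expectation v (\<lambda>x. c * f x) = c * expectation v f"
  unfolding expectation_def by (simp add: sum_distrib_left algebra_simps)

lemma expectation_mono:
  "(\<And>x. x < dim_vec v \<Longrightarrow> f x \<le> g x) \<Longrightarrow> expectation v f \<le> expectation v g"
  unfolding expectation_def by (intro sum_mono mult_left_mono) auto

lemma expectation_kron_vec:
  "expectation (kron_vec v w) (\<lambda>x. g (x div dim_vec w) (x mod dim_vec w))
     = expectation v (\<lambda>y. expectation w (g y))"
proof -
  let ?n = "dim_vec v" and ?m = "dim_vec w"
  have "expectation (kron_vec v w) (\<lambda>x. g (x div ?m) (x mod ?m))
      = (\<Sum>y<?n. \<Sum>p<?m. (cmod (kron_vec v w $ (y*?m + p)))\<^sup>2 * g ((y*?m + p) div ?m) ((y*?m + p) mod ?m))"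
    unfolding expectation_def dim_kron_vec by (rule sum_lessThan_mult)
  also have "\<dots> = (\<Sum>y<?n. \<Sum>p<?m. (cmod (v $ y))\<^sup>2 * ((cmod (w $ p))\<^sup>2 * g y p))"
    by (intro sum.cong refl) (simp add: index_kron_vec mult_add_less_mult norm_mult power_mult_distrib)
  finally show ?thesis by (simp add: expectation_def sum_distrib_left)
qed

lemma expectation_unit_vec: "i < n \<Longrightarrow> expectation (unit_vec n i) g = g i"
  unfolding expectation_def
  by (simp add: unit_vec_def if_distrib[of "\<lambda>z. (cmod z)\<^sup>2 * _"] cong: if_cong)

lemma prob_outcome_not:
  "prob_outcome v (\<lambda>x. \<not> P x) = expectation v (\<lambda>_. 1) - prob_outcome v P"
  unfolding prob_outcome_expectation expectation_diff[symmetric]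
  by (rule arg_cong[where f = "expectation v"]) auto

lemma prob_outcome_mono:
  "(\<And>x. P x \<Longrightarrow> Q x) \<Longrightarrow> prob_outcome v P \<le> prob_outcome v Q"
  unfolding prob_outcome_expectation by (intro expectation_mono) auto

lemma chebyshev_expectation:
  fixes g :: "nat \<Rightarrow> real"
  assumes "\<delta> > 0"
  shows "prob_outcome v (\<lambda>x. \<delta> \<le> \<bar>g x - \<mu>\<bar>) \<le> expectation v (\<lambda>x. (g x - \<mu>)\<^sup>2) / \<delta>\<^sup>2"
proof -
  have "of_bool (\<delta> \<le> \<bar>g x - \<mu>\<bar>) \<le> (g x - \<mu>)\<^sup>2 / \<delta>\<^sup>2" for x
  proof (cases "\<delta> \<le> \<bar>g x - \<mu>\<bar>")
    case True
    then have "\<delta>\<^sup>2 \<le> (g x - \<mu>)\<^sup>2"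
      using assms by (metis abs_of_pos power2_abs abs_le_square_iff)
    with True assms show ?thesis by simp
  qed simp
  then have "prob_outcome v (\<lambda>x. \<delta> \<le> \<bar>g x - \<mu>\<bar>) \<le> expectation v (\<lambda>x. (g x - \<mu>)\<^sup>2 / \<delta>\<^sup>2)"
    unfolding prob_outcome_expectation by (intro expectation_mono) simp
  then show ?thesis by (simp add: expectation_def sum_divide_distrib)
qed

fun count_digits :: "nat \<Rightarrow> (nat \<Rightarrow> bool) \<Rightarrow> nat \<Rightarrow> nat \<Rightarrow> nat" where
  "count_digits P Q 0 x = 0"
| "count_digits P Q (Suc n) x = count_digits P Q n (x div P) + of_bool (Q (x mod P))"

lemma count_digits_le: "count_digits P Q n x \<le> n"
proof (induction n arbitrary: x)
  case (Suc n)
  then show ?case using Suc.IH[of "x div P"] by (auto intro: le_SucI)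
qed simp

definition has_binomial_moments :: "complex vec \<Rightarrow> (nat \<Rightarrow> nat) \<Rightarrow> nat \<Rightarrow> real \<Rightarrow> bool" where
  "has_binomial_moments v k n t \<longleftrightarrow>
     expectation v (\<lambda>_. 1) = 1 \<and>
     expectation v (\<lambda>x. real (k x)) = n * t \<and>
     expectation v (\<lambda>x. (real (k x))\<^sup>2) = n * t + n * (n - 1) * t\<^sup>2"

text \<open>Measuring \<open>f n = f 0 \<otimes> w \<otimes> \<dots> \<otimes> w\<close> performs \<open>n\<close> independent measurements of \<open>w\<close>, so the
  number of outcomes in \<open>Q\<close> is binomially distributed.\<close>

lemma kron_vec_power_binomial_moments:
  assumes f_Suc: "\<And>n. f (Suc n) = kron_vec (f n) w"
    and f0: "expectation (f 0) (\<lambda>_. 1) = 1"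
    and w: "dim_vec w = P" "expectation w (\<lambda>_. 1) = 1"
  shows "has_binomial_moments (f n) (count_digits P Q n) n (expectation w (\<lambda>p. of_bool (Q p)))"
proof (induction n)
  case 0
  with f0 show ?case by (simp add: has_binomial_moments_def) (simp add: expectation_def)
next
  case (Suc n)
  let ?t = "expectation w (\<lambda>p. of_bool (Q p))"
  let ?c = "\<lambda>y. real (count_digits P Q n y)"
  have const: "expectation (f n) (\<lambda>_. a) = a" for a
    using Suc expectation_scale[of "f n" a "\<lambda>_. 1"] by (simp add: has_binomial_moments_def)
  have step: "expectation (f (Suc n)) (\<lambda>x. g (real (count_digits P Q (Suc n) x)))
      = expectation (f n) (\<lambda>y. expectation w (\<lambda>p. g (?c y + of_bool (Q p))))" for g
    using expectation_kron_vec[of "f n" w "\<lambda>y p. g (?c y + of_bool (Q p))"] by (simp add: f_Suc w)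
  have lin: "expectation w (\<lambda>p. a + b * of_bool (Q p)) = a + b * ?t" for a b
    using w by (simp add: expectation_add expectation_scale expectation_scale[of w a "\<lambda>_. 1", simplified])
  have sq: "(a + of_bool q)\<^sup>2 = a\<^sup>2 + (1 + 2 * a) * of_bool q" for a :: real and q
    by (cases q) (simp_all add: power2_eq_square algebra_simps)
  have "expectation (f (Suc n)) (\<lambda>_. 1) = 1"
    using step[of "\<lambda>_. 1"] w const by simp
  moreover have "expectation (f (Suc n)) (\<lambda>x. real (count_digits P Q (Suc n) x)) = expectation (f n) ?c + ?t"
    using step[of "\<lambda>a. a"] lin[of _ 1] const by (simp add: expectation_add)
  moreover have "expectation (f (Suc n)) (\<lambda>x. (real (count_digits P Q (Suc n) x))\<^sup>2)
      = expectation (f n) (\<lambda>y. (?c y)\<^sup>2) + ?t + 2 * ?t * expectation (f n) ?c"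
  proof -
    have "expectation w (\<lambda>p. (?c y + of_bool (Q p))\<^sup>2) = (?c y)\<^sup>2 + ?t + 2 * ?t * ?c y" for y
      unfolding sq lin by (simp add: algebra_simps)
    then show ?thesis
      using step[of "\<lambda>a. a\<^sup>2"] const by (simp add: expectation_add expectation_scale)
  qed
  ultimately show ?case
    using Suc.IH by (simp add: has_binomial_moments_def power2_eq_square algebra_simps)
qed

lemma binomial_two_successes:
  assumes "has_binomial_moments v k 2 t" and "\<And>x. k x \<le> 2"
  shows "prob_outcome v (\<lambda>x. k x = 2) = t\<^sup>2"
proof -
  have indicator: "of_bool (k x = 2) = 1/2 * ((real (k x))\<^sup>2 - real (k x))" for x
    using assms(2)[of x] by (cases "k x"; cases "k x - 1") auto
  have "prob_outcome v (\<lambda>x. k x = 2) = expectation v (\<lambda>x. 1/2 * ((real (k x))\<^sup>2 - real (k x)))"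
    by (simp only: prob_outcome_expectation indicator)
  also have "\<dots> = 1/2 * (expectation v (\<lambda>x. (real (k x))\<^sup>2) - expectation v (\<lambda>x. real (k x)))"
    by (simp only: expectation_scale expectation_diff)
  also have "\<dots> = t\<^sup>2"
    using assms(1) by (simp add: has_binomial_moments_def)
  finally show ?thesis .
qed

lemma binomial_mean_estimate:
  fixes \<delta> :: real
  assumes moments: "has_binomial_moments v k n t" and "n > 0" and "\<delta> > 0" and "3 \<le> 4 * n * \<delta>\<^sup>2"
  shows "prob_outcome v (\<lambda>x. \<bar>real (k x) / n - t\<bar> \<le> \<delta>) \<ge> 2/3"
proof -
  have const: "expectation v (\<lambda>_. a) = a" for a
    using moments expectation_scale[of v a "\<lambda>_. 1"] by (simp add: has_binomial_moments_def)
  have "expectation v (\<lambda>x. (real (k x) - n * t)\<^sup>2)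
      = expectation v (\<lambda>x. (real (k x))\<^sup>2 - (2 * (n * t)) * real (k x) + (n * t)\<^sup>2)"
    by (simp add: power2_diff algebra_simps)
  also have "\<dots> = expectation v (\<lambda>x. (real (k x))\<^sup>2) - (2 * (n * t)) * expectation v (\<lambda>x. real (k x)) + (n * t)\<^sup>2"
    by (simp only: expectation_add expectation_diff expectation_scale const)
  finally have var: "expectation v (\<lambda>x. (real (k x) - n * t)\<^sup>2) = n * (t * (1 - t))"
    using moments by (simp add: has_binomial_moments_def power2_eq_square algebra_simps)
  have "t * (1 - t) \<le> 1/4"
    using zero_le_power2[of "t - 1/2"] by (simp add: power2_eq_square algebra_simps)
  then have "n * (t * (1 - t)) \<le> n * (1/4)"
    by (rule mult_left_mono) simp
  then have "expectation v (\<lambda>x. (real (k x) - n * t)\<^sup>2) / (n * \<delta>)\<^sup>2 \<le> (n * (1/4)) / (n * \<delta>)\<^sup>2"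
    unfolding var by (rule divide_right_mono) simp
  also have "\<dots> \<le> 1/3"
    using \<open>n > 0\<close> \<open>\<delta> > 0\<close> assms(4) by (simp add: field_simps power2_eq_square)
  finally have "expectation v (\<lambda>x. (real (k x) - n * t)\<^sup>2) / (n * \<delta>)\<^sup>2 \<le> 1/3" .
  moreover have "prob_outcome v (\<lambda>x. n * \<delta> \<le> \<bar>real (k x) - n * t\<bar>)
      \<le> expectation v (\<lambda>x. (real (k x) - n * t)\<^sup>2) / (n * \<delta>)\<^sup>2"
    using \<open>n > 0\<close> \<open>\<delta> > 0\<close> by (intro chebyshev_expectation) simp
  moreover have "prob_outcome v (\<lambda>x. \<not> \<bar>real (k x) / n - t\<bar> \<le> \<delta>)
      \<le> prob_outcome v (\<lambda>x. n * \<delta> \<le> \<bar>real (k x) - n * t\<bar>)"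
  proof (rule prob_outcome_mono)
    fix x assume "\<not> \<bar>real (k x) / n - t\<bar> \<le> \<delta>"
    then have "n * \<delta> \<le> n * \<bar>real (k x) / n - t\<bar>" using \<open>n > 0\<close> by simp
    also have "\<dots> = \<bar>n * (real (k x) / n - t)\<bar>"
      by (simp add: abs_mult)
    also have "\<dots> = \<bar>real (k x) - n * t\<bar>"
      using \<open>n > 0\<close> by (simp add: right_diff_distrib)
    finally show "n * \<delta> \<le> \<bar>real (k x) - n * t\<bar>" .
  qed
  ultimately show ?thesis
    using moments prob_outcome_not[of v "\<lambda>x. \<bar>real (k x) / n - t\<bar> \<le> \<delta>"]
    unfolding has_binomial_moments_def by linarith
qed

section \<open>One round: the swap test\<close>

definition inv_sqrt2 :: complex where
  "inv_sqrt2 = complex_of_real (sqrt (1/2))"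

lemma inv_sqrt2_mult_inv_sqrt2: "inv_sqrt2 * (inv_sqrt2 * z) = z / 2"
proof -
  have "inv_sqrt2 * inv_sqrt2 = 1/2"
    unfolding inv_sqrt2_def by (simp flip: of_real_mult)
  then show ?thesis by (simp add: mult.assoc[symmetric])
qed

lemma cnj_inv_sqrt2 [simp]: "cnj inv_sqrt2 = inv_sqrt2"
  unfolding inv_sqrt2_def by simp

text \<open>Writing \<open>p = a * d + i\<close> for \<open>p \<in> \<complex>\<^sup>A \<otimes> \<complex>\<^sup>B\<close>, \<open>swap_B d p p'\<close> combines the
  \<open>A\<close>-part of \<open>p\<close> with the \<open>B\<close>-part of \<open>p'\<close>; so \<open>(p, p') \<mapsto> (swap_B d p p', swap_B d p' p)\<close>
  swaps the two \<open>B\<close> registers.\<close>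

definition swap_B :: "nat \<Rightarrow> nat \<Rightarrow> nat \<Rightarrow> nat" where
  "swap_B d p p' = p div d * d + p' mod d"

lemma swap_B_less: "p < dA * d \<Longrightarrow> swap_B d p p' < dA * d"
  unfolding swap_B_def
  by (metis mult_add_less_mult less_mult_imp_div_less mod_less_divisor mult.commute mult_0_right not_gr0 not_less0)

lemma swap_B_swap_B: "0 < d \<Longrightarrow> swap_B d (swap_B d p p') (swap_B d p' p) = p"
  unfolding swap_B_def by simp

lemma sum_swap_B:
  assumes "0 < d"
  shows "(\<Sum>p1<dA*d. \<Sum>p2<dA*d. f (swap_B d p1 p2) (swap_B d p2 p1)) = (\<Sum>p1<dA*d. \<Sum>p2<dA*d. f p1 p2)"
proof -
  let ?S = "{..<dA*d} \<times> {..<dA*d}" and ?\<sigma> = "\<lambda>(p1, p2). (swap_B d p1 p2, swap_B d p2 p1)"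
  have "(\<Sum>(p1, p2)\<in>?S. f (swap_B d p1 p2) (swap_B d p2 p1)) = (\<Sum>(p1, p2)\<in>?S. f p1 p2)"
    by (rule sum.reindex_bij_witness[of _ ?\<sigma> ?\<sigma>]) (auto simp: swap_B_less swap_B_swap_B assms)
  then show ?thesis by (simp add: sum.cartesian_product)
qed

definition \<phi> :: "complex mat \<Rightarrow> nat \<Rightarrow> complex" where
  "\<phi> U p = U $$ (p, 0)"

definition swap_test_amp :: "nat \<Rightarrow> complex mat \<Rightarrow> nat \<Rightarrow> nat \<Rightarrow> nat \<Rightarrow> complex" where
  "swap_test_amp d U c p1 p2 = 1/2 * (\<phi> U p1 * cnj (\<phi> U p2)
     + (if c = 0 then 1 else -1) * (\<phi> U (swap_B d p1 p2) * cnj (\<phi> U (swap_B d p2 p1))))"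

definition swap_test_vec :: "nat \<Rightarrow> nat \<Rightarrow> complex mat \<Rightarrow> complex vec" where
  "swap_test_vec dA d U = vec (2 * (dA*d) * (dA*d))
     (\<lambda>p. swap_test_amp d U (p div (dA*d) div (dA*d)) (p div (dA*d) mod (dA*d)) (p mod (dA*d)))"

text \<open>The work space of one round is \<open>\<complex>\<^sup>D \<otimes> \<complex>\<^sup>K \<otimes> \<complex>\<^sup>2 \<otimes> \<complex>\<^sup>D \<otimes> \<complex>\<^sup>D\<close>
  with \<open>D = dA * d\<close>: the query register \<open>q\<close>, the ancilla \<open>m\<close> of the algorithm the round is
  prepended to, and a fresh ancilla of dimension \<open>P = 2 * D * D\<close> holding a control qubit \<open>c\<close> and
  two copies \<open>p\<^sub>1\<close>, \<open>p\<^sub>2\<close> of the query register.\<close>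

locale swap_test_round =
  fixes dA d K :: nat
begin

abbreviation "D \<equiv> dA * d"
abbreviation "P \<equiv> 2 * D * D"
abbreviation "N \<equiv> D * (K * P)"

definition idx :: "nat \<Rightarrow> nat \<Rightarrow> nat \<Rightarrow> nat \<Rightarrow> nat \<Rightarrow> nat" where
  "idx q m c p1 p2 = (((q*K + m)*2 + c)*D + p1)*D + p2"

definition reg_2 :: "nat \<Rightarrow> nat" where "reg_2 x = x mod D"
definition reg_1 :: "nat \<Rightarrow> nat" where "reg_1 x = x div D mod D"
definition reg_c :: "nat \<Rightarrow> nat" where "reg_c x = x div D div D mod 2"
definition reg_m :: "nat \<Rightarrow> nat" where "reg_m x = x div D div D div 2 mod K"
definition reg_q :: "nat \<Rightarrow> nat" where "reg_q x = x div D div D div 2 div K"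

lemma idx_regs: "idx (reg_q x) (reg_m x) (reg_c x) (reg_1 x) (reg_2 x) = x"
  unfolding idx_def reg_q_def reg_m_def reg_c_def reg_1_def reg_2_def by (simp only: div_mult_mod_eq)

lemma regs_idx [simp]:
  assumes "m < K" "c < 2" "p1 < D" "p2 < D"
  shows "reg_q (idx q m c p1 p2) = q" "reg_m (idx q m c p1 p2) = m" "reg_c (idx q m c p1 p2) = c"
    "reg_1 (idx q m c p1 p2) = p1" "reg_2 (idx q m c p1 p2) = p2"
  unfolding idx_def reg_q_def reg_m_def reg_c_def reg_1_def reg_2_def
  by (simp_all only: mult_add_div_eq mult_add_mod_eq assms)

lemma idx_split: "idx q m c p1 p2 = q * (K*P) + idx 0 m c p1 p2"
  unfolding idx_def by (simp add: algebra_simps)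

lemma N_eq: "N = (((D*K)*2)*D)*D" by (simp add: algebra_simps)

lemma idx_less:
  assumes "q < D" "m < K" "c < 2" "p1 < D" "p2 < D"
  shows "idx q m c p1 p2 < N"
  unfolding idx_def N_eq using assms by (intro mult_add_less_mult)+

lemma regs_less:
  assumes "x < N"
  shows "reg_q x < D" "reg_m x < K" "reg_c x < 2" "reg_1 x < D" "reg_2 x < D"
proof -
  have "0 < D" "0 < K" using assms by (auto intro!: Nat.gr0I)
  moreover have "x < D * (((D*D)*2)*K)" using assms by (simp add: algebra_simps)
  ultimately show "reg_q x < D" "reg_m x < K" "reg_c x < 2" "reg_1 x < D" "reg_2 x < D"
    unfolding reg_q_def reg_m_def reg_c_def reg_1_def reg_2_def
    by (simp_all add: div_mult2_eq[symmetric] less_mult_imp_div_less)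
qed

lemma idx_0_less:
  assumes "m < K" "c < 2" "p1 < D" "p2 < D"
  shows "idx 0 m c p1 p2 < K*P"
proof -
  have "((m*2 + c)*D + p1)*D + p2 < ((K*2)*D)*D" using assms by (intro mult_add_less_mult)+
  then show ?thesis by (simp add: idx_def algebra_simps)
qed

lemma idx_eq_0_iff:
  assumes "q < D" "m < K" "c < 2" "p1 < D" "p2 < D"
  shows "idx q m c p1 p2 = 0 \<longleftrightarrow> q = 0 \<and> m = 0 \<and> c = 0 \<and> p1 = 0 \<and> p2 = 0"
  using assms unfolding idx_def by auto

definition state :: "(nat \<Rightarrow> nat \<Rightarrow> nat \<Rightarrow> nat \<Rightarrow> nat \<Rightarrow> complex) \<Rightarrow> complex vec" where
  "state F = vec N (\<lambda>x. F (reg_q x) (reg_m x) (reg_c x) (reg_1 x) (reg_2 x))"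

lemma index_state:
  assumes "q < D" "m < K" "c < 2" "p1 < D" "p2 < D"
  shows "state F $ idx q m c p1 p2 = F q m c p1 p2"
  using assms by (simp add: state_def idx_less)

lemma state_cong:
  assumes "\<And>q m c p1 p2. q < D \<Longrightarrow> m < K \<Longrightarrow> c < 2 \<Longrightarrow> p1 < D \<Longrightarrow> p2 < D \<Longrightarrow> F q m c p1 p2 = G q m c p1 p2"
  shows "state F = state G"
  unfolding state_def using assms regs_less by (intro eq_vecI) auto

lemma unit_vec_eq_state: "unit_vec N 0 = state (\<lambda>q m c p1 p2. of_bool (q = 0 \<and> m = 0 \<and> c = 0 \<and> p1 = 0 \<and> p2 = 0))"
proof (rule eq_vecI)
  fix x assume "x < dim_vec (state (\<lambda>q m c p1 p2. of_bool (q = 0 \<and> m = 0 \<and> c = 0 \<and> p1 = 0 \<and> p2 = 0)))"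
  then have x: "x < N" by (simp add: state_def)
  show "unit_vec N 0 $ x = state (\<lambda>q m c p1 p2. of_bool (q = 0 \<and> m = 0 \<and> c = 0 \<and> p1 = 0 \<and> p2 = 0)) $ x"
    using x idx_eq_0_iff[OF regs_less[OF x]] unfolding idx_regs
    by (auto simp: state_def unit_vec_def reg_q_def reg_m_def reg_c_def reg_1_def reg_2_def)
qed (simp add: state_def)

lemma query_mult_state:
  assumes V: "V \<in> carrier_mat D D"
  shows "kron V (1\<^sub>m (K*P)) *\<^sub>v state F = state (\<lambda>q m c p1 p2. \<Sum>q'<D. V $$ (q,q') * F q' m c p1 p2)"
proof (rule eq_vecI)
  fix x assume "x < dim_vec (state (\<lambda>q m c p1 p2. \<Sum>q'<D. V $$ (q,q') * F q' m c p1 p2))"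
  then have x: "x < N" by (simp add: state_def)
  note regs = regs_less[OF x]
  define y where "y = idx 0 (reg_m x) (reg_c x) (reg_1 x) (reg_2 x)"
  have y: "y < K*P" unfolding y_def using regs by (intro idx_0_less)
  have "x = reg_q x * (K*P) + y"
    unfolding y_def by (subst idx_regs[symmetric, of x]) (rule idx_split)
  then have x_div: "x div (K*P) = reg_q x" and x_mod: "x mod (K*P) = y"
    using y by (metis mult_add_div_eq, metis mult_add_mod_eq)
  have "(kron V (1\<^sub>m (K*P)) *\<^sub>v state F) $ x = (\<Sum>j<D*(K*P). kron V (1\<^sub>m (K*P)) $$ (x,j) * state F $ j)"
    using V x by (subst index_mult_mat_vec_sum) (auto simp: state_def)
  also have "\<dots> = (\<Sum>a<D. \<Sum>b<K*P. kron V (1\<^sub>m (K*P)) $$ (x, a*(K*P) + b) * state F $ (a*(K*P) + b))"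
    by (rule sum_lessThan_mult)
  also have "\<dots> = (\<Sum>a<D. \<Sum>b<K*P. if b = y then V $$ (reg_q x, a) * state F $ (a*(K*P) + y) else 0)"
    using V x y by (intro sum.cong refl) (auto simp: index_kron mult_add_less_mult x_div x_mod)
  also have "\<dots> = (\<Sum>a<D. V $$ (reg_q x, a) * F a (reg_m x) (reg_c x) (reg_1 x) (reg_2 x))"
    using y regs unfolding y_def idx_split[symmetric] by (simp add: index_state)
  also have "\<dots> = state (\<lambda>q m c p1 p2. \<Sum>q'<D. V $$ (q,q') * F q' m c p1 p2) $ x"
    using x by (simp add: state_def)
  finally show "(kron V (1\<^sub>m (K*P)) *\<^sub>v state F) $ x = state (\<lambda>q m c p1 p2. \<Sum>q'<D. V $$ (q,q') * F q' m c p1 p2) $ x" .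
qed (use V in \<open>simp add: state_def\<close>)

lemma perm_gate_mult_state:
  assumes "involution_on N \<sigma>"
  shows "perm_gate N \<sigma> *\<^sub>v state F =
    vec N (\<lambda>x. F (reg_q (\<sigma> x)) (reg_m (\<sigma> x)) (reg_c (\<sigma> x)) (reg_1 (\<sigma> x)) (reg_2 (\<sigma> x)))"
  unfolding state_def by (rule perm_gate_mult_vec[OF assms])

definition swap_q1 :: "nat \<Rightarrow> nat" where
  "swap_q1 x = idx (reg_1 x) (reg_m x) (reg_c x) (reg_q x) (reg_2 x)"
definition swap_q2 :: "nat \<Rightarrow> nat" where
  "swap_q2 x = idx (reg_2 x) (reg_m x) (reg_c x) (reg_1 x) (reg_q x)"
definition cswap_B :: "nat \<Rightarrow> nat" where
  "cswap_B x = (if reg_c x = 1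
     then idx (reg_q x) (reg_m x) 1 (swap_B d (reg_1 x) (reg_2 x)) (swap_B d (reg_2 x) (reg_1 x))
     else x)"
definition flip_c :: "nat \<Rightarrow> nat" where
  "flip_c x = idx (reg_q x) (reg_m x) (1 - reg_c x) (reg_1 x) (reg_2 x)"

lemma involution_swap_q1: "involution_on N swap_q1"
  unfolding involution_on_def swap_q1_def by (auto simp: regs_less idx_less idx_regs)

lemma involution_swap_q2: "involution_on N swap_q2"
  unfolding involution_on_def swap_q2_def by (auto simp: regs_less idx_less idx_regs)

lemma involution_flip_c: "involution_on N flip_c"
  unfolding involution_on_def
proof (intro allI impI conjI)
  fix x assume x: "x < N"
  note regs = regs_less[OF x]
  then have "1 - (1 - reg_c x) = reg_c x" by auto
  with regs show "flip_c x < N" "flip_c (flip_c x) = x"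
    unfolding flip_c_def by (simp_all add: idx_less idx_regs)
qed

lemma involution_cswap_B: "involution_on N cswap_B"
  unfolding involution_on_def
proof (intro allI impI conjI)
  fix x assume x: "x < N"
  note regs = regs_less[OF x]
  then have "0 < d" by (auto intro!: Nat.gr0I)
  show "cswap_B x < N" using x regs by (simp add: cswap_B_def idx_less swap_B_less)
  show "cswap_B (cswap_B x) = x"
  proof (cases "reg_c x = 1")
    case True
    then have "cswap_B (cswap_B x) = idx (reg_q x) (reg_m x) (reg_c x) (reg_1 x) (reg_2 x)"
      using regs \<open>0 < d\<close> by (simp add: cswap_B_def swap_B_less swap_B_swap_B)
    then show ?thesis by (simp add: idx_regs)
  qed (simp add: cswap_B_def)
qed

lemma swap_q1_mult_state: "perm_gate N swap_q1 *\<^sub>v state F = state (\<lambda>q m c p1 p2. F p1 m c q p2)"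
  unfolding perm_gate_mult_state[OF involution_swap_q1]
  by (rule eq_vecI) (auto simp: state_def swap_q1_def regs_less)

lemma swap_q2_mult_state: "perm_gate N swap_q2 *\<^sub>v state F = state (\<lambda>q m c p1 p2. F p2 m c p1 q)"
  unfolding perm_gate_mult_state[OF involution_swap_q2]
  by (rule eq_vecI) (auto simp: state_def swap_q2_def regs_less)

lemma cswap_B_mult_state:
  "perm_gate N cswap_B *\<^sub>v state F =
   state (\<lambda>q m c p1 p2. if c = 1 then F q m c (swap_B d p1 p2) (swap_B d p2 p1) else F q m c p1 p2)"
  unfolding perm_gate_mult_state[OF involution_cswap_B]
  by (rule eq_vecI) (auto simp: state_def cswap_B_def regs_less swap_B_less)

definition hadamard_c :: "complex mat" where
  "hadamard_c = involution_gate N flip_c (\<lambda>x. if reg_c x = 0 then inv_sqrt2 else - inv_sqrt2) (\<lambda>_. inv_sqrt2)"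

lemma flip_c_moves:
  assumes "x < N" shows "reg_c (flip_c x) = 1 - reg_c x" and "flip_c x \<noteq> x"
proof -
  show c: "reg_c (flip_c x) = 1 - reg_c x" using regs_less[OF assms] by (simp add: flip_c_def)
  show "flip_c x \<noteq> x" using regs_less(3)[OF assms] c by (metis One_nat_def diff_Suc_1 diff_zero less_2_cases_iff zero_neq_one)
qed

lemma unitary_hadamard_c: "unitary_mat N hadamard_c"
  unfolding hadamard_c_def
proof (rule unitary_involution_gate[OF involution_flip_c])
  fix i assume i: "i < N"
  then have "reg_c i < 2" by (rule regs_less)
  with i show "(if reg_c i = 0 then inv_sqrt2 else - inv_sqrt2) * cnj (if reg_c i = 0 then inv_sqrt2 else - inv_sqrt2)
      + inv_sqrt2 * cnj inv_sqrt2 = 1 \<and>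
    (if reg_c i = 0 then inv_sqrt2 else - inv_sqrt2) * cnj inv_sqrt2
      + inv_sqrt2 * cnj (if reg_c (flip_c i) = 0 then inv_sqrt2 else - inv_sqrt2) = 0"
    using inv_sqrt2_mult_inv_sqrt2[of 1] by (auto simp: flip_c_moves algebra_simps)
qed (use flip_c_moves in blast)

lemma hadamard_c_mult_state:
  "hadamard_c *\<^sub>v state F =
   state (\<lambda>q m c p1 p2. inv_sqrt2 * ((if c = 0 then 1 else -1) * F q m c p1 p2 + F q m (1 - c) p1 p2))"
proof (rule eq_vecI)
  fix x assume "x < dim_vec (state (\<lambda>q m c p1 p2. inv_sqrt2 * ((if c = 0 then 1 else -1) * F q m c p1 p2 + F q m (1 - c) p1 p2)))"
  then have x: "x < N" by (simp add: state_def)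
  have "flip_c x < N" using involution_flip_c x by (simp add: involution_on_def)
  then have "(hadamard_c *\<^sub>v state F) $ x
      = (if reg_c x = 0 then inv_sqrt2 else - inv_sqrt2) * state F $ x + inv_sqrt2 * state F $ flip_c x"
    unfolding hadamard_c_def using x flip_c_moves[OF x]
    by (subst index_involution_gate_mult_vec) (auto simp: state_def)
  then show "(hadamard_c *\<^sub>v state F) $ x = state (\<lambda>q m c p1 p2. inv_sqrt2 * ((if c = 0 then 1 else -1) * F q m c p1 p2 + F q m (1 - c) p1 p2)) $ x"
    using x \<open>flip_c x < N\<close> regs_less[OF x] by (simp add: state_def flip_c_def algebra_simps)
qed (simp add: state_def hadamard_c_def)

definition swap_test_steps :: "step list" where
  "swap_test_steps = [QueryU, Gate (perm_gate N swap_q1), QueryUconj, Gate (perm_gate N swap_q2),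
                      Gate hadamard_c, Gate (perm_gate N cswap_B), Gate hadamard_c]"

lemma valid_swap_test_steps: "valid_alg dA d (K*P) swap_test_steps"
  using unitary_perm_gate[OF involution_swap_q1] unitary_perm_gate[OF involution_swap_q2]
    unitary_perm_gate[OF involution_cswap_B] unitary_hadamard_c
  by (auto simp: valid_alg_def swap_test_steps_def)

lemma num_queries_swap_test_steps [simp]:
  "num_U_queries swap_test_steps = 1" "num_Uconj_queries swap_test_steps = 1"
  by (simp_all add: swap_test_steps_def num_U_queries_def num_Uconj_queries_def)

lemma state_eq_kron_vec:
  "state (\<lambda>q m c p1 p2. of_bool (q = 0 \<and> m = 0) * G c p1 p2)
   = kron_vec (unit_vec (D*K) 0) (vec P (\<lambda>p. G (p div D div D) (p div D mod D) (p mod D)))"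
proof (rule eq_vecI)
  fix x assume "x < dim_vec (kron_vec (unit_vec (D*K) 0) (vec P (\<lambda>p. G (p div D div D) (p div D mod D) (p mod D))))"
  then have x: "x < N" by (simp add: algebra_simps)
  note regs = regs_less[OF x]
  define y where "y = reg_q x * K + reg_m x"
  define p where "p = (reg_c x * D + reg_1 x) * D + reg_2 x"
  have y: "y < D*K" unfolding y_def using regs by (simp add: mult_add_less_mult)
  have p: "p < P" unfolding p_def using regs by (simp add: mult_add_less_mult)
  have "x = y * P + p"
    unfolding y_def p_def by (subst idx_regs[symmetric, of x]) (simp add: idx_def algebra_simps)
  then have "x div P = y" "x mod P = p" using p by simp_all
  moreover have "p div D div D = reg_c x" "p div D mod D = reg_1 x" "p mod D = reg_2 x"
    unfolding p_def using regs by simp_all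
  moreover have "y = 0 \<longleftrightarrow> reg_q x = 0 \<and> reg_m x = 0"
    unfolding y_def using regs by auto
  ultimately show "state (\<lambda>q m c p1 p2. of_bool (q = 0 \<and> m = 0) * G c p1 p2) $ x
      = kron_vec (unit_vec (D*K) 0) (vec P (\<lambda>p. G (p div D div D) (p div D mod D) (p mod D))) $ x"
    using x y p by (simp add: state_def index_kron_vec unit_vec_def algebra_simps)
qed (simp add: state_def algebra_simps)

lemma fold_swap_test_steps:
  assumes U: "U \<in> carrier_mat D D"
  shows "fold (apply_step (K*P) U) swap_test_steps (unit_vec N 0)
       = kron_vec (unit_vec (D*K) 0) (swap_test_vec dA d U)"
proof -
  have U': "cmat_conj U \<in> carrier_mat D D" using U by (simp add: cmat_conj_def)
  have query_U: "kron U (1\<^sub>m (K*P)) *\<^sub>v unit_vec N 0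
      = state (\<lambda>q m c p1 p2. \<phi> U q * of_bool (m = 0 \<and> c = 0 \<and> p1 = 0 \<and> p2 = 0))"
    unfolding unit_vec_eq_state query_mult_state[OF U]
    by (rule state_cong) (auto simp: \<phi>_def sum.If_cases)
  have query_conj: "kron (cmat_conj U) (1\<^sub>m (K*P)) *\<^sub>v state (\<lambda>q m c p1 p2. \<phi> U p1 * of_bool (m = 0 \<and> c = 0 \<and> q = 0 \<and> p2 = 0))
      = state (\<lambda>q m c p1 p2. cnj (\<phi> U q) * \<phi> U p1 * of_bool (m = 0 \<and> c = 0 \<and> p2 = 0))"
    unfolding query_mult_state[OF U']
    by (rule state_cong) (use U in \<open>auto simp: \<phi>_def cmat_conj_def mult.assoc[symmetric] sum.If_cases\<close>)
  have hadamard1: "hadamard_c *\<^sub>v state (\<lambda>q m c p1 p2. cnj (\<phi> U p2) * \<phi> U p1 * of_bool (m = 0 \<and> c = 0 \<and> q = 0))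
      = state (\<lambda>q m c p1 p2. inv_sqrt2 * (\<phi> U p1 * cnj (\<phi> U p2)) * of_bool (q = 0 \<and> m = 0))"
    unfolding hadamard_c_mult_state by (rule state_cong) (auto simp: less_2_cases_iff)
  have hadamard2: "hadamard_c *\<^sub>v state (\<lambda>q m c p1 p2.
        if c = 1 then inv_sqrt2 * (\<phi> U (swap_B d p1 p2) * cnj (\<phi> U (swap_B d p2 p1))) * of_bool (q = 0 \<and> m = 0)
        else inv_sqrt2 * (\<phi> U p1 * cnj (\<phi> U p2)) * of_bool (q = 0 \<and> m = 0))
      = state (\<lambda>q m c p1 p2. of_bool (q = 0 \<and> m = 0) * swap_test_amp d U c p1 p2)"
    unfolding hadamard_c_mult_state
    by (rule state_cong) (auto simp: less_2_cases_iff swap_test_amp_def inv_sqrt2_mult_inv_sqrt2 algebra_simps)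
  have "fold (apply_step (K*P) U) swap_test_steps (unit_vec N 0)
      = hadamard_c *\<^sub>v (perm_gate N cswap_B *\<^sub>v (hadamard_c *\<^sub>v (perm_gate N swap_q2 *\<^sub>v
          (kron (cmat_conj U) (1\<^sub>m (K*P)) *\<^sub>v (perm_gate N swap_q1 *\<^sub>v (kron U (1\<^sub>m (K*P)) *\<^sub>v unit_vec N 0))))))"
    by (simp only: swap_test_steps_def fold_Cons fold_Nil comp_def id_def apply_step_def step.case)
  also have "\<dots> = state (\<lambda>q m c p1 p2. of_bool (q = 0 \<and> m = 0) * swap_test_amp d U c p1 p2)"
    unfolding query_U swap_q1_mult_state query_conj swap_q2_mult_state hadamard1 cswap_B_mult_state hadamard2 ..
  finally show ?thesis
    unfolding swap_test_vec_def state_eq_kron_vec .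
qed

end

fun repeated_swap_test :: "nat \<Rightarrow> nat \<Rightarrow> nat \<Rightarrow> step list" where
  "repeated_swap_test dA d 0 = []"
| "repeated_swap_test dA d (Suc n) =
     swap_test_round.swap_test_steps dA d ((2 * (dA*d) * (dA*d)) ^ n)
     @ map (lift_step (2 * (dA*d) * (dA*d))) (repeated_swap_test dA d n)"

lemma num_queries_repeated_swap_test:
  "num_U_queries (repeated_swap_test dA d n) = n" "num_Uconj_queries (repeated_swap_test dA d n) = n"
  by (induction n) (simp_all add: swap_test_round.num_queries_swap_test_steps)

lemma valid_repeated_swap_test:
  "valid_alg dA d ((2 * (dA*d) * (dA*d)) ^ n) (repeated_swap_test dA d n)"
proof (induction n)
  case (Suc n)
  let ?P = "2 * (dA*d) * (dA*d)"
  have "valid_alg dA d (?P ^ n * ?P) (swap_test_round.swap_test_steps dA d (?P ^ n))"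
    by (rule swap_test_round.valid_swap_test_steps)
  moreover have "valid_alg dA d (?P ^ n * ?P) (map (lift_step ?P) (repeated_swap_test dA d n))"
    using Suc by (rule valid_alg_map_lift_step)
  ultimately show ?case by (simp add: power_Suc2 del: power_Suc)
qed (simp add: valid_alg_def)

lemma final_state_repeated_swap_test_Suc:
  assumes U: "U \<in> carrier_mat (dA*d) (dA*d)"
  shows "final_state ((2 * (dA*d) * (dA*d)) ^ Suc n) U (repeated_swap_test dA d (Suc n))
       = kron_vec (final_state ((2 * (dA*d) * (dA*d)) ^ n) U (repeated_swap_test dA d n)) (swap_test_vec dA d U)"
proof -
  let ?P = "2 * (dA*d) * (dA*d)"
  have "fold (apply_step (?P ^ n * ?P) U) (swap_test_round.swap_test_steps dA d (?P ^ n)) (unit_vec (dA*d * (?P ^ n * ?P)) 0)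
      = kron_vec (unit_vec (dA*d * ?P ^ n) 0) (swap_test_vec dA d U)"
    by (rule swap_test_round.fold_swap_test_steps[OF U])
  moreover have "dim_vec (swap_test_vec dA d U) = ?P"
    by (simp add: swap_test_vec_def)
  ultimately show ?thesis
    using U fold_map_lift_step[OF U valid_repeated_swap_test[of dA d n]]
    by (simp add: final_state_def power_Suc2 del: power_Suc)
qed

section \<open>Acceptance probability and the main result\<close>

lemma realness_le_1:
  assumes "is_unit_vec d \<psi>"
  shows "realness \<psi> \<le> 1"
proof -
  have "cmod (\<Sum>i<d. (\<psi> $ i)\<^sup>2) \<le> (\<Sum>i<d. (cmod (\<psi> $ i))\<^sup>2)"
    using norm_sum[of "\<lambda>i. (\<psi> $ i)\<^sup>2" "{..<d}"] by (simp add: norm_power)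
  with assms have "cmod (\<Sum>i<dim_vec \<psi>. (\<psi> $ i)\<^sup>2) \<le> 1"
    by (auto simp: is_unit_vec_def)
  then show ?thesis
    unfolding realness_def by (simp add: power_le_one)
qed

lemma state_prep_dims_pos:
  assumes unit: "is_unit_vec d \<psi>" and prep: "state_prep dA d U (outer \<psi>)"
  shows "0 < dA" and "0 < d"
proof -
  have \<psi>: "dim_vec \<psi> = d" "(\<Sum>i<d. (cmod (\<psi> $ i))\<^sup>2) = 1"
    using unit by (auto simp: is_unit_vec_def)
  then show "0 < d" by (cases d) auto
  show "0 < dA"
  proof (rule ccontr)
    assume "\<not> 0 < dA"
    moreover have "outer \<psi> = ptrace_A dA d (outer (U *\<^sub>v unit_vec (dA*d) 0))"
      using prep by (simp add: state_prep_def)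
    ultimately have "outer \<psi> $$ (i,i) = 0" if "i < d" for i
      using that by (simp add: ptrace_A_def)
    then have "(\<Sum>i<d. (cmod (\<psi> $ i))\<^sup>2) = 0"
      using \<psi>(1) by (simp add: outer_def)
    with \<psi>(2) show False by simp
  qed
qed

context
  fixes dA d :: nat and U :: "complex mat" and \<psi> :: "complex vec"
  assumes unit: "is_unit_vec d \<psi>" and prep: "state_prep dA d U (outer \<psi>)"
begin

lemma U_carrier: "U \<in> carrier_mat (dA*d) (dA*d)"
  using prep by (simp add: state_prep_def unitary_mat_def)

lemma dims_pos: "0 < dA" "0 < d"
  using state_prep_dims_pos[OF unit prep] by auto

lemma dim_\<psi>: "dim_vec \<psi> = d"
  using unit by (auto simp: is_unit_vec_def)

lemma ptrace_\<phi>: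
  assumes "i < d" and "j < d"
  shows "(\<Sum>a<dA. \<phi> U (a*d + i) * cnj (\<phi> U (a*d + j))) = \<psi> $ i * cnj (\<psi> $ j)"
proof -
  let ?v = "U *\<^sub>v unit_vec (dA*d) 0"
  have v: "?v $ p = \<phi> U p" if "p < dA*d" for p
    unfolding \<phi>_def by (rule index_mult_mat_vec_unit_vec[OF U_carrier that]) (simp add: dims_pos)
  have "dim_vec ?v = dA*d" using U_carrier by simp
  then have "(\<Sum>a<dA. \<phi> U (a*d + i) * cnj (\<phi> U (a*d + j))) = (\<Sum>a<dA. outer ?v $$ (a*d + i, a*d + j))"
    using assms by (intro sum.cong refl) (simp add: outer_def v mult_add_less_mult del: index_mult_mat_vec)
  also have "\<dots> = ptrace_A dA d (outer ?v) $$ (i,j)"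
    using assms by (simp add: ptrace_A_def)
  also have "\<dots> = outer \<psi> $$ (i,j)"
    using prep unfolding state_prep_def by (simp only:)
  also have "\<dots> = \<psi> $ i * cnj (\<psi> $ j)"
    using assms by (simp add: outer_def dim_\<psi>)
  finally show ?thesis .
qed

lemma sum_norm_\<phi>: "(\<Sum>p<dA*d. \<phi> U p * cnj (\<phi> U p)) = 1"
proof -
  have "(\<Sum>p<dA*d. \<phi> U p * cnj (\<phi> U p)) = (\<Sum>i<d. \<Sum>a<dA. \<phi> U (a*d + i) * cnj (\<phi> U (a*d + i)))"
    by (simp add: sum_lessThan_mult sum.swap[of _ "{..<dA}"])
  also have "\<dots> = (\<Sum>i<d. \<psi> $ i * cnj (\<psi> $ i))"
    by (simp add: ptrace_\<phi>)
  also have "\<dots> = (\<Sum>i<d. complex_of_real ((cmod (\<psi> $ i))\<^sup>2))"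
    by (intro sum.cong refl) (rule complex_norm_square[symmetric])
  also have "\<dots> = complex_of_real (\<Sum>i<d. (cmod (\<psi> $ i))\<^sup>2)"
    by (rule of_real_sum[symmetric])
  also have "\<dots> = 1"
    using unit by (auto simp: is_unit_vec_def)
  finally show ?thesis .
qed

abbreviation \<Phi> :: "nat \<Rightarrow> nat \<Rightarrow> complex" where
  "\<Phi> p1 p2 \<equiv> \<phi> U p1 * cnj (\<phi> U p2)"

lemma sum_norm_\<Phi>: "(\<Sum>p1<dA*d. \<Sum>p2<dA*d. \<Phi> p1 p2 * cnj (\<Phi> p1 p2)) = 1"
proof -
  have "(\<Sum>p1<dA*d. \<Sum>p2<dA*d. \<Phi> p1 p2 * cnj (\<Phi> p1 p2))
      = (\<Sum>p1<dA*d. \<phi> U p1 * cnj (\<phi> U p1)) * (\<Sum>p2<dA*d. \<phi> U p2 * cnj (\<phi> U p2))"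
    by (simp add: sum_product algebra_simps)
  then show ?thesis by (simp add: sum_norm_\<phi>)
qed

text \<open>The overlap of \<open>|\<phi>\<rangle>|\<phi>\<^sup>*\<rangle>\<close> with its image under the swap of the two \<open>B\<close> registers is
  \<open>tr (\<rho> \<rho>\<^sup>T) = |\<Sum>\<^sub>i \<psi>\<^sub>i\<^sup>2|\<^sup>2\<close>, where \<open>\<rho> = tr\<^sub>A |\<phi>\<rangle>\<langle>\<phi>| = |\<psi>\<rangle>\<langle>\<psi>|\<close>.\<close>

lemma sum_\<Phi>_cnj_swap_B:
  "(\<Sum>p1<dA*d. \<Sum>p2<dA*d. \<Phi> p1 p2 * cnj (\<Phi> (swap_B d p1 p2) (swap_B d p2 p1)))
   = (\<Sum>i<d. (\<psi> $ i)\<^sup>2) * cnj (\<Sum>i<d. (\<psi> $ i)\<^sup>2)"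
proof -
  have "(\<Sum>p1<dA*d. \<Sum>p2<dA*d. \<Phi> p1 p2 * cnj (\<Phi> (swap_B d p1 p2) (swap_B d p2 p1)))
      = (\<Sum>i1<d. \<Sum>i2<d. \<Sum>a1<dA. \<Sum>a2<dA.
           \<Phi> (a1*d + i1) (a1*d + i2) * \<Phi> (a2*d + i1) (a2*d + i2))"
    unfolding sum_pairs_lessThan_mult
    by (intro sum.cong refl) (simp add: swap_B_def algebra_simps)
  also have "\<dots> = (\<Sum>i1<d. \<Sum>i2<d. (\<psi> $ i1 * cnj (\<psi> $ i2)) * (\<psi> $ i1 * cnj (\<psi> $ i2)))"
    by (intro sum.cong refl) (simp add: sum_product[symmetric] ptrace_\<phi>)
  also have "\<dots> = (\<Sum>i<d. (\<psi> $ i)\<^sup>2) * cnj (\<Sum>i<d. (\<psi> $ i)\<^sup>2)"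
    by (simp add: sum_product power2_eq_square algebra_simps)
  finally show ?thesis .
qed

lemma expectation_swap_test_vec:
  "complex_of_real (expectation (swap_test_vec dA d U) g)
   = (\<Sum>c<2. \<Sum>p1<dA*d. \<Sum>p2<dA*d. swap_test_amp d U c p1 p2 * cnj (swap_test_amp d U c p1 p2)
                                        * of_real (g ((c * (dA*d) + p1) * (dA*d) + p2)))"
proof -
  let ?D = "dA*d" and ?w = "swap_test_vec dA d U"
  have "dim_vec ?w = (2 * ?D) * ?D" by (simp add: swap_test_vec_def)
  then have "expectation ?w g = (\<Sum>u<2 * ?D. \<Sum>p2<?D. (cmod (?w $ (u*?D + p2)))\<^sup>2 * g (u*?D + p2))"
    unfolding expectation_def by (simp only: sum_lessThan_mult)
  also have "\<dots> = (\<Sum>c<2. \<Sum>p1<?D. \<Sum>p2<?D. (cmod (?w $ ((c*?D + p1)*?D + p2)))\<^sup>2 * g ((c*?D + p1)*?D + p2))"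
    by (rule sum_lessThan_mult)
  also have "\<dots> = (\<Sum>c<2. \<Sum>p1<?D. \<Sum>p2<?D. (cmod (swap_test_amp d U c p1 p2))\<^sup>2 * g ((c*?D + p1)*?D + p2))"
    by (intro sum.cong refl) (simp add: swap_test_vec_def mult_add_less_mult)
  finally show ?thesis by (simp only: of_real_sum of_real_mult complex_norm_square)
qed

lemma swap_test_amp_cnj:
  "swap_test_amp d U c p1 p2 * cnj (swap_test_amp d U c p1 p2)
   = 1/4 * (\<Phi> p1 p2 * cnj (\<Phi> p1 p2)
            + \<Phi> (swap_B d p1 p2) (swap_B d p2 p1) * cnj (\<Phi> (swap_B d p1 p2) (swap_B d p2 p1)))
     + (if c = 0 then 1 else -1) / 4 * (\<Phi> p1 p2 * cnj (\<Phi> (swap_B d p1 p2) (swap_B d p2 p1))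
            + \<Phi> (swap_B d p1 p2) (swap_B d p2 p1) * cnj (\<Phi> p1 p2))"
  by (simp add: swap_test_amp_def field_simps)

lemma sum_over_control_bit:
  "(\<Sum>c<2::nat. \<Sum>p1<dA*d. \<Sum>p2<dA*d. F c p1 p2) = (\<Sum>p1<dA*d. \<Sum>p2<dA*d. F 0 p1 p2 + F 1 p1 p2)"
  by (simp add: numeral_2_eq_2 sum.distrib)

lemma expectation_swap_test_vec_one: "expectation (swap_test_vec dA d U) (\<lambda>_. 1) = 1"
proof -
  let ?D = "dA*d"
  have "complex_of_real (expectation (swap_test_vec dA d U) (\<lambda>_. 1))
      = 1/2 * (\<Sum>p1<?D. \<Sum>p2<?D. \<Phi> p1 p2 * cnj (\<Phi> p1 p2))
        + 1/2 * (\<Sum>p1<?D. \<Sum>p2<?D. \<Phi> (swap_B d p1 p2) (swap_B d p2 p1) * cnj (\<Phi> (swap_B d p1 p2) (swap_B d p2 p1)))"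
    unfolding expectation_swap_test_vec sum_over_control_bit swap_test_amp_cnj
    by (simp add: sum.distrib sum_distrib_left algebra_simps)
  also have "\<dots> = 1"
    unfolding sum_swap_B[OF dims_pos(2), of "\<lambda>p1 p2. \<Phi> p1 p2 * cnj (\<Phi> p1 p2)" dA] sum_norm_\<Phi> by simp
  finally show ?thesis by simp
qed

lemma expectation_swap_test_accept:
  "expectation (swap_test_vec dA d U) (\<lambda>p. of_bool (p < dA*d * (dA*d))) = (1 + realness \<psi>) / 2"
proof -
  let ?D = "dA*d" and ?s = "\<Sum>i<d. (\<psi> $ i)\<^sup>2"
  have accept: "(c*?D + p1)*?D + p2 < ?D*?D \<longleftrightarrow> c = 0" if "c < 2" "p1 < ?D" "p2 < ?D" for c p1 p2
    using that mult_add_less_mult[of p1 ?D p2 ?D] by (auto simp: less_2_cases_iff algebra_simps)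
  have "complex_of_real (expectation (swap_test_vec dA d U) (\<lambda>p. of_bool (p < ?D*?D)))
      = (\<Sum>p1<?D. \<Sum>p2<?D. swap_test_amp d U 0 p1 p2 * cnj (swap_test_amp d U 0 p1 p2))"
    unfolding expectation_swap_test_vec sum_over_control_bit
    by (intro sum.cong refl) (simp add: accept[of 0, simplified] accept[of 1, simplified])
  also have "\<dots> = 1/4 * (\<Sum>p1<?D. \<Sum>p2<?D. \<Phi> p1 p2 * cnj (\<Phi> p1 p2))
        + 1/4 * (\<Sum>p1<?D. \<Sum>p2<?D. \<Phi> (swap_B d p1 p2) (swap_B d p2 p1) * cnj (\<Phi> (swap_B d p1 p2) (swap_B d p2 p1)))
        + 1/4 * (\<Sum>p1<?D. \<Sum>p2<?D. \<Phi> p1 p2 * cnj (\<Phi> (swap_B d p1 p2) (swap_B d p2 p1)))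
        + 1/4 * cnj (\<Sum>p1<?D. \<Sum>p2<?D. \<Phi> p1 p2 * cnj (\<Phi> (swap_B d p1 p2) (swap_B d p2 p1)))"
    unfolding swap_test_amp_cnj by (simp add: sum.distrib sum_distrib_left algebra_simps)
  also have "\<dots> = (1 + ?s * cnj ?s) / 2"
    unfolding sum_swap_B[OF dims_pos(2), of "\<lambda>p1 p2. \<Phi> p1 p2 * cnj (\<Phi> p1 p2)" dA]
      sum_norm_\<Phi> sum_\<Phi>_cnj_swap_B
    by (simp add: field_simps)
  also have "\<dots> = complex_of_real ((1 + realness \<psi>) / 2)"
  proof -
    have "complex_of_real (realness \<psi>) = ?s * cnj ?s"
      unfolding realness_def dim_\<psi> by (rule complex_norm_square)
    then show ?thesis by simp
  qed
  finally show ?thesis by (simp only: of_real_eq_iff)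
qed

end

lemma repeated_swap_test_binomial:
  assumes unit: "is_unit_vec d \<psi>" and prep: "state_prep dA d U (outer \<psi>)"
  shows "has_binomial_moments (final_state ((2 * (dA*d) * (dA*d)) ^ n) U (repeated_swap_test dA d n))
           (count_digits (2 * (dA*d) * (dA*d)) (\<lambda>p. p < dA*d * (dA*d)) n) n ((1 + realness \<psi>) / 2)"
proof -
  let ?P = "2 * (dA*d) * (dA*d)"
  have "0 < dA*d" using state_prep_dims_pos[OF unit prep] by simp
  then have "expectation (final_state (?P ^ 0) U (repeated_swap_test dA d 0)) (\<lambda>_. 1) = 1"
    using U_carrier[OF unit prep] by (simp add: final_state_def expectation_unit_vec)
  moreover have "dim_vec (swap_test_vec dA d U) = ?P"
    by (simp add: swap_test_vec_def)
  ultimately have "has_binomial_moments (final_state (?P ^ n) U (repeated_swap_test dA d n))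
      (count_digits ?P (\<lambda>p. p < dA*d * (dA*d)) n) n
      (expectation (swap_test_vec dA d U) (\<lambda>p. of_bool (p < dA*d * (dA*d))))"
    by (rule kron_vec_power_binomial_moments[where f = "\<lambda>n. final_state (?P ^ n) U (repeated_swap_test dA d n)",
          OF final_state_repeated_swap_test_Suc[OF U_carrier[OF unit prep]] _ _ expectation_swap_test_vec_one[OF unit prep]])
  then show ?thesis
    unfolding expectation_swap_test_accept[OF unit prep] .
qed

lemma reality_test_two_queries:
  "\<exists>K steps (out :: nat \<Rightarrow> bool).
     valid_alg dA d K steps \<and> num_U_queries steps = 2 \<and> num_Uconj_queries steps = 2 \<and>
     (\<forall>U \<psi>. is_unit_vec d \<psi> \<longrightarrow> state_prep dA d U (outer \<psi>) \<longrightarrow>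
        (realness \<psi> = 1 \<longrightarrow> prob_outcome (final_state K U steps) out \<ge> 2/3) \<and>
        (realness \<psi> < 1/10 \<longrightarrow> prob_outcome (final_state K U steps) (\<lambda>x. \<not> out x) \<ge> 2/3))"
proof -
  let ?P = "2 * (dA*d) * (dA*d)"
  let ?steps = "repeated_swap_test dA d 2"
  let ?out = "\<lambda>x. count_digits ?P (\<lambda>p. p < dA*d * (dA*d)) 2 x = 2"
  show ?thesis
  proof (intro exI[of _ "?P ^ 2"] exI[of _ ?steps] exI[of _ ?out] conjI allI impI)
    show "valid_alg dA d (?P ^ 2) ?steps" by (rule valid_repeated_swap_test)
    show "num_U_queries ?steps = 2" "num_Uconj_queries ?steps = 2"
      by (rule num_queries_repeated_swap_test)+
  next
    fix U \<psi> assume unit: "is_unit_vec d \<psi>" and prep: "state_prep dA d U (outer \<psi>)"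
    note moments = repeated_swap_test_binomial[OF unit prep, of 2]
    have accept: "prob_outcome (final_state (?P ^ 2) U ?steps) ?out = ((1 + realness \<psi>) / 2)\<^sup>2"
      using moments count_digits_le by (rule binomial_two_successes)
    show "prob_outcome (final_state (?P ^ 2) U ?steps) ?out \<ge> 2/3" if "realness \<psi> = 1"
      using accept that by simp
    show "prob_outcome (final_state (?P ^ 2) U ?steps) (\<lambda>x. \<not> ?out x) \<ge> 2/3" if "realness \<psi> < 1/10"
    proof -
      have "((1 + realness \<psi>) / 2)\<^sup>2 \<le> (11/20)\<^sup>2"
        using that by (intro power_mono) (auto simp: realness_def)
      moreover have "expectation (final_state (?P ^ 2) U ?steps) (\<lambda>_. 1) = 1"
        using moments by (simp add: has_binomial_moments_def)
      ultimately show ?thesis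
        using accept prob_outcome_not[of "final_state (?P ^ 2) U ?steps" ?out] by (simp add: power_divide)
    qed
  qed
qed

lemma repeated_swap_test_estimate:
  fixes \<epsilon> :: real
  assumes unit: "is_unit_vec d \<psi>" and prep: "state_prep dA d U (outer \<psi>)"
    and "0 < n" and "0 < \<epsilon>" and "3 \<le> n * \<epsilon>\<^sup>2"
  defines "k \<equiv> count_digits (2 * (dA*d) * (dA*d)) (\<lambda>p. p < dA*d * (dA*d)) n"
  shows "prob_outcome (final_state ((2 * (dA*d) * (dA*d)) ^ n) U (repeated_swap_test dA d n))
           (\<lambda>x. \<bar>2 * real (k x) / n - 1 - realness \<psi>\<bar> \<le> \<epsilon>) \<ge> 2/3"
proof -
  let ?v = "final_state ((2 * (dA*d) * (dA*d)) ^ n) U (repeated_swap_test dA d n)"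
  have "3 \<le> 4 * n * (\<epsilon>/2)\<^sup>2" using assms(5) by (simp add: power_divide)
  with assms(3,4) have "2/3 \<le> prob_outcome ?v (\<lambda>x. \<bar>real (k x) / n - (1 + realness \<psi>) / 2\<bar> \<le> \<epsilon>/2)"
    unfolding k_def by (intro binomial_mean_estimate[OF repeated_swap_test_binomial[OF unit prep]]) simp_all
  also have "\<dots> \<le> prob_outcome ?v (\<lambda>x. \<bar>2 * real (k x) / n - 1 - realness \<psi>\<bar> \<le> \<epsilon>)"
    by (rule prob_outcome_mono) (simp add: abs_le_iff field_simps)
  finally show ?thesis .
qed

lemma realness_estimation:
  fixes \<epsilon> :: real
  assumes "0 < \<epsilon>"
  shows "\<exists>K steps (est :: nat \<Rightarrow> real).
     valid_alg dA d K steps \<and> real (num_U_queries steps + num_Uconj_queries steps) \<le> 8 / \<epsilon>\<^sup>2 \<and>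
     (\<forall>U \<psi>. is_unit_vec d \<psi> \<longrightarrow> state_prep dA d U (outer \<psi>) \<longrightarrow>
        prob_outcome (final_state K U steps) (\<lambda>x. \<bar>est x - realness \<psi>\<bar> \<le> \<epsilon>) \<ge> 2/3)"
proof (cases "\<epsilon> < 1")
  case True
  let ?P = "2 * (dA*d) * (dA*d)"
  define n where "n = nat \<lceil>3 / \<epsilon>\<^sup>2\<rceil>"
  let ?k = "count_digits ?P (\<lambda>p. p < dA*d * (dA*d)) n"
  have n: "3 / \<epsilon>\<^sup>2 \<le> n" "n \<le> 3 / \<epsilon>\<^sup>2 + 1"
    unfolding n_def using assms by (simp_all add: of_nat_nat order.trans[OF le_of_int_ceiling])
  then have "0 < n" using assms by (auto intro!: Nat.gr0I simp: field_simps)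
  show ?thesis
  proof (intro exI[of _ "?P ^ n"] exI[of _ "repeated_swap_test dA d n"]
      exI[of _ "\<lambda>x. 2 * real (?k x) / n - 1"] conjI allI impI)
    show "valid_alg dA d (?P ^ n) (repeated_swap_test dA d n)" by (rule valid_repeated_swap_test)
    have "1 \<le> 1 / \<epsilon>\<^sup>2" using assms True by (simp add: power_le_one field_simps)
    then show "real (num_U_queries (repeated_swap_test dA d n) + num_Uconj_queries (repeated_swap_test dA d n))
        \<le> 8 / \<epsilon>\<^sup>2"
      using n by (simp add: num_queries_repeated_swap_test)
  next
    fix U \<psi> assume "is_unit_vec d \<psi>" and "state_prep dA d U (outer \<psi>)"
    with \<open>0 < n\<close> assms n show "prob_outcome (final_state (?P ^ n) U (repeated_swap_test dA d n))
        (\<lambda>x. \<bar>2 * real (?k x) / n - 1 - realness \<psi>\<bar> \<le> \<epsilon>) \<ge> 2/3"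
      by (intro repeated_swap_test_estimate) (simp_all add: field_simps)
  qed
next
  case False
  show ?thesis
  proof (intro exI[of _ 1] exI[of _ "[]"] exI[of _ "\<lambda>_. 1/2"] conjI allI impI)
    show "valid_alg dA d 1 []" by (simp add: valid_alg_def)
    show "real (num_U_queries [] + num_Uconj_queries []) \<le> 8 / \<epsilon>\<^sup>2" by simp
  next
    fix U \<psi> assume unit: "is_unit_vec d \<psi>" and prep: "state_prep dA d U (outer \<psi>)"
    have "0 \<le> realness \<psi>" by (simp add: realness_def)
    then have "\<bar>1/2 - realness \<psi>\<bar> \<le> \<epsilon>"
      using False realness_le_1[OF unit] by (simp add: abs_le_iff)
    then show "prob_outcome (final_state 1 U []) (\<lambda>x. \<bar>1/2 - realness \<psi>\<bar> \<le> \<epsilon>) \<ge> 2/3"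
      using repeated_swap_test_binomial[OF unit prep, of 0]
      by (simp add: prob_outcome_expectation has_binomial_moments_def)
  qed
qed

theorem lemma3p2:
  shows "(\<forall>dA d. \<exists>K steps (out :: nat \<Rightarrow> bool).
            valid_alg dA d K steps \<and> num_U_queries steps = 2 \<and> num_Uconj_queries steps = 2 \<and>
            (\<forall>U \<psi>. is_unit_vec d \<psi> \<longrightarrow> state_prep dA d U (outer \<psi>) \<longrightarrow>
               (realness \<psi> = 1 \<longrightarrow> prob_outcome (final_state K U steps) out \<ge> 2/3) \<and>
               (realness \<psi> < 1/10 \<longrightarrow>
                  prob_outcome (final_state K U steps) (\<lambda>x. \<not> out x) \<ge> 2/3)))
       \<and> (\<exists>C::real. C > 0 \<and> (\<forall>\<epsilon>::real. \<epsilon> > 0 \<longrightarrow> (\<forall>dA d. \<exists>K steps (est :: nat \<Rightarrow> real).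
            valid_alg dA d K steps \<and>
            real (num_U_queries steps + num_Uconj_queries steps) \<le> C / \<epsilon>\<^sup>2 \<and>
            (\<forall>U \<psi>. is_unit_vec d \<psi> \<longrightarrow> state_prep dA d U (outer \<psi>) \<longrightarrow>
               prob_outcome (final_state K U steps) (\<lambda>x. \<bar>est x - realness \<psi>\<bar> \<le> \<epsilon>) \<ge> 2/3))))"
  using reality_test_two_queries realness_estimation by (intro conjI exI[of _ 8]) auto

end
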